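(* Let $d$ be a positive integer, let $1<p\leqslant 2$, let $0<\varepsilon\leqslant1$, let $k\geqslant d$ be an integer, and set \[ \beta=\beta(p,\varepsilon)\coloneqq\Big(\frac{\varepsilon}{10}\Big)^{\frac{10}{p-1}},\qquad \ell=\ell(p,\varepsilon,k)\coloneqq\Big\lceil\frac{4}{\varepsilon^4(p-1)}\,k\Big\rceil. \] Let $n\geqslant\ell$ be an integer and let $\boldsymbol{X}$ be a $(\beta,\ell)$-dissociated, $d$-dimensional random array on $[n]$ whose entries take values in a measurable space $\mathcal{X}$. Then for every measurable function $f\colon\mathcal{X}^{\binom{[n]}{d}}\to\mathbb{R}$ with $\mathbb{E}[f(\boldsymbol{X})]=0$ and $\|f(\boldsymbol{X})\|_{L_p}=1$ there exists an interval $I$ of $[n]$ with $|I|=k$ such that for every $J\subseteq I$ with $|J|\geqslant d$, \[ \mathbb{P}\big(\big|\mathbb{E}[f(\boldsymbol{X})\,|\,\mathcal{F}_J]\big|\leqslant\varepsilon\big)\geqslant1-\varepsilon. \]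
   Context: $[n]=\{1,\dots,n\}$, $\binom{I}{d}$ is the set of $d$-element subsets of $I$. A $d$-dimensional random array on $[n]$ is a stochastic process $\boldsymbol{X}=\langle X_s:s\in\binom{[n]}{d}\rangle$; for $J\subseteq[n]$ with $|J|\geqslant d$, $\mathcal{F}_J=\sigma(\{X_s:s\in\binom{J}{d}\})$. For integers $n\geqslant\ell\geqslant 2d$ and $0\leqslant\beta\leqslant1$, $\boldsymbol{X}$ is $(\beta,\ell)$-dissociated if for every $J,K\subseteq[n]$ with $|J|,|K|\geqslant d$, $|J|+|K|\leqslant\ell$ and $\max(J)<\min(K)$, and all events $A\in\mathcal{F}_J$, $B\in\mathcal{F}_K$, we have $|\mathbb{P}(A\cap B)-\mathbb{P}(A)\mathbb{P}(B)|\leqslant\beta$. An interval of $[n]$ is a set of consecutive integers. *)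

theory Defs
  imports "HOL-Probability.Probability"
begin

definition dsubsets :: "nat set \<Rightarrow> nat \<Rightarrow> nat set set" where
  "dsubsets I d = {s. s \<subseteq> I \<and> card s = d}"

definition array_sigma ::
  "'a measure \<Rightarrow> 'x measure \<Rightarrow> nat \<Rightarrow> (nat set \<Rightarrow> 'a \<Rightarrow> 'x) \<Rightarrow> nat set \<Rightarrow> 'a measure" where
  "array_sigma M N d X J =
     sigma (space M) (\<Union>s\<in>dsubsets J d. {X s -` A \<inter> space M | A. A \<in> sets N})"

definition dissociated ::
  "'a measure \<Rightarrow> 'x measure \<Rightarrow> nat \<Rightarrow> nat \<Rightarrow> real \<Rightarrow> nat \<Rightarrow> (nat set \<Rightarrow> 'a \<Rightarrow> 'x) \<Rightarrow> bool" where
  "dissociated M N d n \<beta> L X \<longleftrightarrow>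
     (\<forall>J K. J \<subseteq> {1..n} \<and> K \<subseteq> {1..n} \<and> card J \<ge> d \<and> card K \<ge> d \<and>
            card J + card K \<le> L \<and> Max J < Min K \<longrightarrow>
        (\<forall>A\<in>sets (array_sigma M N d X J). \<forall>B\<in>sets (array_sigma M N d X K).
           \<bar>measure M (A \<inter> B) - measure M A * measure M B\<bar> \<le> \<beta>))"

definition is_interval :: "nat \<Rightarrow> nat set \<Rightarrow> bool" where
  "is_interval n I \<longleftrightarrow> I \<subseteq> {1..n} \<and> (\<exists>a b. I = {a..b})"

definition beta_par :: "real \<Rightarrow> real \<Rightarrow> real" where
  "beta_par p \<epsilon> = (\<epsilon> / 10) powr (10 / (p - 1))"

definition ell_par :: "real \<Rightarrow> real \<Rightarrow> nat \<Rightarrow> nat" where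
  "ell_par p \<epsilon> k = nat \<lceil>4 / (\<epsilon> ^ 4 * (p - 1)) * real k\<rceil>"

end

theory Submission
  imports Defs
begin

(*
  Suppose every interval of length k contains a J with P(|E[Y | F_J]| \<le> \<epsilon>) < 1 - \<epsilon>,
  where Y = f(X). Apply this to m = ell div k consecutive blocks of length k, and let
  s_i \<in> {-1, 0, 1} be the sign of E[Y | F_(J_i)], truncated to 0 on [-\<epsilon>, \<epsilon>]. Since s_i is
  F_(J_i)-measurable, E[Y s_i] = E[E[Y | F_(J_i)] s_i] > \<epsilon>^2, hence E[Y W] > m \<epsilon>^2 for the
  centred sum W = \<Sum>_i (s_i - E s_i).

  On the other hand the blocks are disjoint and consecutive, so dissociation makes the s_i
  approximately independent: on every atom their joint law differs from the product of the
  marginals by at most |S| \<beta>. Expanding W^(2R) into monomials, with R = \<lceil>q/2\<rceil> and q the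
  conjugate exponent of p, compares E[W^(2R)] with the same moment for independent copies,
  which Hoeffding's lemma bounds by 2 (2 R m / e)^R. The choice of \<beta> and ell makes
  E[W^(2R)] < (m \<epsilon>^2)^(2R), and Hoelder's inequality with |Y|_p = 1 gives E[Y W] < m \<epsilon>^2.
*)

section \<open>Integrability and elementary inequalities\<close>

lemma integrable_bounded_on_space:
  fixes f :: "'a \<Rightarrow> real"
  assumes "finite_measure M" and "f \<in> borel_measurable M"
    and "\<And>x. x \<in> space M \<Longrightarrow> \<bar>f x\<bar> \<le> B"
  shows "integrable M f"
  using assms by (intro finite_measure.integrable_const_bound[where B = B] AE_I2) auto

lemma integrable_mult_bounded:
  fixes Y W :: "'a \<Rightarrow> real"
  assumes Y: "integrable M Y" and W: "W \<in> borel_measurable M"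
    and bd: "\<And>\<omega>. \<omega> \<in> space M \<Longrightarrow> \<bar>W \<omega>\<bar> \<le> B"
  shows "integrable M (\<lambda>\<omega>. Y \<omega> * W \<omega>)"
proof (rule Bochner_Integration.integrable_bound)
  show "integrable M (\<lambda>\<omega>. B * Y \<omega>)"
    using Y by simp
  show "(\<lambda>\<omega>. Y \<omega> * W \<omega>) \<in> borel_measurable M"
    using borel_measurable_integrable[OF Y] W by measurable
  have "\<bar>Y \<omega>\<bar> * \<bar>W \<omega>\<bar> \<le> \<bar>Y \<omega>\<bar> * \<bar>B\<bar>" if "\<omega> \<in> space M" for \<omega>
    using bd[OF that] by (intro mult_left_mono) auto
  then show "AE \<omega> in M. norm (Y \<omega> * W \<omega>) \<le> norm (B * Y \<omega>)"
    by (intro AE_I2) (simp add: abs_mult mult.commute)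
qed

lemma integrable_of_integrable_abs_powr:
  fixes Y :: "'a \<Rightarrow> real"
  assumes "finite_measure M" and Y: "Y \<in> borel_measurable M" and p: "p \<ge> 1"
    and int: "integrable M (\<lambda>\<omega>. \<bar>Y \<omega>\<bar> powr p)"
  shows "integrable M Y"
proof (rule Bochner_Integration.integrable_bound)
  show "integrable M (\<lambda>\<omega>. 1 + \<bar>Y \<omega>\<bar> powr p)"
    using assms by (simp add: finite_measure.integrable_const)
  have "\<bar>y\<bar> \<le> 1 + \<bar>y\<bar> powr p" for y :: real
  proof (cases "\<bar>y\<bar> \<le> 1")
    case False
    then have "\<bar>y\<bar> powr 1 \<le> \<bar>y\<bar> powr p"
      using p by (intro powr_mono) auto
    then show ?thesis
      using False by simp
  qed (simp add: add_increasing2)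
  then show "AE \<omega> in M. norm (Y \<omega>) \<le> norm (1 + \<bar>Y \<omega>\<bar> powr p)"
    by (intro AE_I2) simp
qed (rule Y)

lemma sets_Collect_eq_real:
  fixes f :: "'a \<Rightarrow> real"
  assumes "f \<in> borel_measurable M"
  shows "{x\<in>space M. f x = c} \<in> sets M"
proof -
  have "{x\<in>space M. f x = c} = f -` {c} \<inter> space M"
    by auto
  then show ?thesis
    using assms by auto
qed

lemma (in prob_space) expectation_mem_Icc:
  fixes g :: "'a \<Rightarrow> real"
  assumes g: "g \<in> borel_measurable M" and bd: "\<And>x. x \<in> space M \<Longrightarrow> g x \<in> {a..b}"
  shows "expectation g \<in> {a..b}"
proof -
  have "\<bar>g x\<bar> \<le> \<bar>a\<bar> + \<bar>b\<bar>" if "x \<in> space M" for x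
    using bd[OF that] by auto
  then have int: "integrable M g"
    using g by (intro integrable_bounded_on_space) (auto simp: finite_measure_axioms)
  have "expectation g \<le> b"
    using bd by (intro integral_le_const[OF int] AE_I2) auto
  moreover have "a \<le> expectation g"
    using bd by (intro integral_ge_const[OF int] AE_I2) auto
  ultimately show ?thesis
    by auto
qed

lemma abs_centered_sum_le:
  fixes t \<mu> :: "nat \<Rightarrow> real"
  assumes "\<And>i. i < m \<Longrightarrow> t i \<in> {-1..1} \<and> \<mu> i \<in> {-1..1}"
  shows "\<bar>\<Sum>i<m. t i - \<mu> i\<bar> \<le> 2 * real m"
proof -
  have "\<bar>t i - \<mu> i\<bar> \<le> 2" if "i < m" for i
    using assms[OF that] by auto
  then have "\<bar>\<Sum>i<m. t i - \<mu> i\<bar> \<le> (\<Sum>i<m. 2)"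
    by (intro order.trans[OF sum_abs] sum_mono) auto
  then show ?thesis
    by simp
qed

lemma abs_centered_monomial_le:
  fixes t \<mu> :: "nat \<Rightarrow> real"
  assumes "\<And>j. j < n \<Longrightarrow> t (f j) \<in> {-1..1} \<and> \<mu> (f j) \<in> {-1..1}"
  shows "\<bar>\<Prod>j<n. t (f j) - \<mu> (f j)\<bar> \<le> 2 ^ n"
proof -
  have "\<bar>t (f j) - \<mu> (f j)\<bar> \<le> 2" if "j < n" for j
    using assms[OF that] by auto
  then show ?thesis
    unfolding abs_prod by (intro prod_le_power) auto
qed

lemma power_sum_eq_sum_PiE:
  fixes x :: "nat \<Rightarrow> 'a::comm_semiring_1"
  shows "(\<Sum>i<m. x i) ^ n = (\<Sum>f\<in>{..<n} \<rightarrow>\<^sub>E {..<m}. \<Prod>j<n. x (f j))"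
proof -
  have "(\<Sum>i<m. x i) ^ n = (\<Prod>j<n. \<Sum>i<m. x i)"
    by simp
  also have "\<dots> = (\<Sum>f\<in>{..<n} \<rightarrow>\<^sub>E {..<m}. \<Prod>j<n. x (f j))"
    by (rule prod_sum_PiE) auto
  finally show ?thesis .
qed

lemma powr_inverse_eq_1D:
  fixes x p :: real
  assumes "x \<ge> 0" and "p > 0" and "x powr (1 / p) = 1"
  shows "x = 1"
proof -
  have "x \<noteq> 0"
    using assms(3) by auto
  then have "x = (x powr (1 / p)) powr p"
    using assms(1,2) by (simp add: powr_powr)
  then show ?thesis
    using assms(3) by simp
qed

lemma abs_power_le_exp_sum:
  fixes w l :: real
  assumes l: "l > 0" and n: "n \<ge> 1"
  shows "\<bar>w\<bar> ^ n \<le> (real n / (exp 1 * l)) ^ n * (exp (l * w) + exp (- (l * w)))"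
proof -
  define y where "y = l * \<bar>w\<bar> / n"
  have "y ^ n \<le> exp (y - 1) ^ n"
    using exp_ge_add_one_self[of "y - 1"] l by (intro power_mono) (auto simp: y_def)
  also have "\<dots> = exp (real n * y - real n * 1)"
    by (simp add: exp_of_nat_mult[symmetric] right_diff_distrib)
  also have "\<dots> = exp (l * \<bar>w\<bar>) / exp 1 ^ n"
    using n by (simp add: exp_diff y_def exp_of_nat_mult[symmetric])
  finally have y: "y ^ n \<le> exp (l * \<bar>w\<bar>) / exp 1 ^ n" .
  have "\<bar>w\<bar> ^ n = (real n / l) ^ n * y ^ n"
    using l n by (simp add: y_def power_mult_distrib[symmetric])
  also have "\<dots> \<le> (real n / l) ^ n * (exp (l * \<bar>w\<bar>) / exp 1 ^ n)"
    using y l by (intro mult_left_mono) auto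
  also have "\<dots> = (real n / (exp 1 * l)) ^ n * exp (l * \<bar>w\<bar>)"
    by (simp add: power_divide power_mult_distrib)
  also have "\<dots> \<le> (real n / (exp 1 * l)) ^ n * (exp (l * w) + exp (- (l * w)))"
    using l by (intro mult_left_mono) (auto simp: abs_if)
  finally show ?thesis .
qed

lemma Young_scaled:
  fixes a b p q T :: real
  assumes p: "p > 1" and q: "q > 1" and pq: "1 / p + 1 / q = 1"
    and T: "T > 0" and a: "a \<ge> 0" and b: "b \<ge> 0"
  shows "a * b \<le> T / p * a powr p + T / q * (b / T) powr q"
proof -
  define \<alpha> where "\<alpha> = T powr (1 / p)"
  have \<alpha>: "\<alpha> > 0"
    using T by (simp add: \<alpha>_def)
  have "a * b = (\<alpha> * a) * (b / \<alpha>)"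
    using \<alpha> by simp
  also have "\<dots> \<le> (\<alpha> * a) powr p / p + (b / \<alpha>) powr q / q"
    using p q pq a b \<alpha> by (intro Youngs_inequality) auto
  also have "(\<alpha> * a) powr p = T * a powr p"
    using \<alpha> a T p by (simp add: powr_mult \<alpha>_def powr_powr)
  also have "(b / \<alpha>) powr q = T * (b / T) powr q"
  proof -
    have "q / p = q - 1"
      using pq p q by (simp add: field_simps)
    then have "\<alpha> powr q = T powr q / T"
      using T by (simp add: \<alpha>_def powr_powr powr_diff)
    then show ?thesis
      using b T \<alpha> by (simp add: powr_divide)
  qed
  finally show ?thesis
    by simp
qed

lemma powr_le_power_interpolation:
  fixes x q :: real and r :: nat
  assumes x: "x \<ge> 0" and q: "q > 0" "q \<le> r"
  shows "x powr q \<le> q / r * x ^ r + (1 - q / r)"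
proof (cases "x = 0")
  case True
  then show ?thesis
    using q by simp
next
  case False
  have "(x ^ r) powr (q / r) * 1 powr (1 - q / r) \<le> q / r * x ^ r + (1 - q / r) * 1"
    using x q False by (intro Youngs_inequality_0) auto
  moreover have "(x ^ r) powr (q / r) = x powr q"
    using x q False by (simp add: powr_realpow[symmetric] powr_powr)
  ultimately show ?thesis
    by simp
qed

(* Hoelder's inequality E[Y W] \<le> |Y|_p |W|_q \<le> |W|_(2R), done pointwise: Young's inequality,
   then (|W|/T)^q is interpolated between 1 and (|W|/T)^(2R). *)
lemma integral_mult_lt_of_moment_lt:
  fixes Y W :: "'a \<Rightarrow> real" and p T :: real and R :: nat
  assumes "prob_space M" and p: "1 < p" and qR: "p / (p - 1) \<le> 2 * real R" and T: "T > 0"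
    and intY: "integrable M (\<lambda>\<omega>. \<bar>Y \<omega>\<bar> powr p)" and normY: "(\<integral>\<omega>. \<bar>Y \<omega>\<bar> powr p \<partial>M) = 1"
    and intW: "integrable M (\<lambda>\<omega>. W \<omega> ^ (2 * R))"
    and momW: "(\<integral>\<omega>. W \<omega> ^ (2 * R) \<partial>M) < T ^ (2 * R)"
    and intYW: "integrable M (\<lambda>\<omega>. Y \<omega> * W \<omega>)"
  shows "(\<integral>\<omega>. Y \<omega> * W \<omega> \<partial>M) < T"
proof -
  interpret prob_space M by fact
  define q where "q = p / (p - 1)"
  define r where "r = 2 * R"
  have q: "q > 1" and pq: "1 / p + 1 / q = 1"
    using p by (auto simp: q_def field_simps)
  have qr: "q \<le> real r"
    using qR by (simp add: q_def r_def)
  define g where "g \<omega> = T / p * \<bar>Y \<omega>\<bar> powr p + T / q * (q / r * W \<omega> ^ r / T ^ r + (1 - q / r))"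
    for \<omega>
  have "Y \<omega> * W \<omega> \<le> g \<omega>" for \<omega>
  proof -
    have "(\<bar>W \<omega>\<bar> / T) powr q \<le> q / r * (\<bar>W \<omega>\<bar> / T) ^ r + (1 - q / r)"
      using q qr T by (intro powr_le_power_interpolation) auto
    also have "\<dots> = q / r * W \<omega> ^ r / T ^ r + (1 - q / r)"
      by (simp add: r_def power_divide power_even_abs)
    finally have W: "(\<bar>W \<omega>\<bar> / T) powr q \<le> q / r * W \<omega> ^ r / T ^ r + (1 - q / r)" .
    have "Y \<omega> * W \<omega> \<le> \<bar>Y \<omega>\<bar> * \<bar>W \<omega>\<bar>"
      by (simp add: abs_mult[symmetric])
    also have "\<dots> \<le> T / p * \<bar>Y \<omega>\<bar> powr p + T / q * (\<bar>W \<omega>\<bar> / T) powr q"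
      using p q pq T by (intro Young_scaled) auto
    also have "\<dots> \<le> g \<omega>"
      unfolding g_def using W T q by (intro add_left_mono mult_left_mono) auto
    finally show ?thesis .
  qed
  then have "(\<integral>\<omega>. Y \<omega> * W \<omega> \<partial>M) \<le> (\<integral>\<omega>. g \<omega> \<partial>M)"
    using intY intW intYW by (intro integral_mono) (auto simp: g_def r_def)
  also have "(\<integral>\<omega>. g \<omega> \<partial>M) = T / p + T / q * (q / r * (\<integral>\<omega>. W \<omega> ^ r \<partial>M) / T ^ r + (1 - q / r))"
    using intY intW normY by (simp add: g_def r_def prob_space)
  also have "\<dots> < T / p + T / q"
  proof -
    have "q / r * ((\<integral>\<omega>. W \<omega> ^ r \<partial>M) / T ^ r) < q / r * 1"
      using momW T q qr by (intro mult_strict_left_mono) (auto simp: r_def)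
    then have "T / q * (q / r * (\<integral>\<omega>. W \<omega> ^ r \<partial>M) / T ^ r + (1 - q / r)) < T / q * 1"
      using T q by (intro mult_strict_left_mono) auto
    then show ?thesis
      by simp
  qed
  also have "\<dots> = T * (1 / p + 1 / q)"
    by (simp add: distrib_left)
  also have "\<dots> = T"
    by (simp add: pq)
  finally show ?thesis .
qed

section \<open>Moments of sums of independent bounded variables\<close>

lemma Hoeffding_mgf_le:
  fixes g :: "'a \<Rightarrow> real"
  assumes "prob_space M" and g: "g \<in> borel_measurable M"
    and bd: "\<And>x. x \<in> space M \<Longrightarrow> g x \<in> {-1..1}" and l: "l > 0"
  shows "(\<integral>x. exp (l * (g x - integral\<^sup>L M g)) \<partial>M) \<le> exp (l\<^sup>2 / 2)"
proof -
  interpret prob_space M by fact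
  interpret interval_bounded_random_variable M g "-1" 1
  proof
    show "AE x in M. g x \<in> {-1..1}"
      using bd by (intro AE_I2) auto
  qed (rule g)
  have "(\<integral>x. exp (l * (g x - expectation g)) \<partial>M)
      = enn2real (\<integral>\<^sup>+x. exp (l * (g x - expectation g)) \<partial>M)"
    using g by (intro integral_eq_nn_integral) auto
  also have "\<dots> \<le> exp (l\<^sup>2 * (1 - (-1))\<^sup>2 / 8)"
    using Hoeffdings_lemma_nn_integral[OF l] by (intro enn2real_leI) auto
  finally show ?thesis
    by simp
qed

lemma even_moment_le_mgf:
  fixes W :: "'a \<Rightarrow> real"
  assumes P: "prob_space P" and Wm: "W \<in> borel_measurable P"
    and Wb: "\<And>\<omega>. \<omega> \<in> space P \<Longrightarrow> \<bar>W \<omega>\<bar> \<le> B" and l: "l > 0" and R: "R \<ge> 1"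
  shows "(\<integral>\<omega>. W \<omega> ^ (2 * R) \<partial>P)
    \<le> (real (2 * R) / (exp 1 * l)) ^ (2 * R) * ((\<integral>\<omega>. exp (l * W \<omega>) \<partial>P) + (\<integral>\<omega>. exp (- (l * W \<omega>)) \<partial>P))"
proof -
  interpret prob_space P by fact
  have B: "\<bar>W \<omega>\<bar> ^ (2 * R) \<le> B ^ (2 * R)" if "\<omega> \<in> space P" for \<omega>
    using Wb[OF that] by (intro power_mono) auto
  have exp_bound: "\<bar>exp (c * W \<omega>)\<bar> \<le> exp (\<bar>c\<bar> * B)" if "\<omega> \<in> space P" for c \<omega>
    using mult_mono[OF order.refl Wb[OF that], of "\<bar>c\<bar>"] abs_ge_self[of "c * W \<omega>"]
    by (simp add: abs_mult)
  have intW: "integrable P (\<lambda>\<omega>. W \<omega> ^ (2 * R))"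
    using Wm B by (intro integrable_bounded_on_space) (auto simp: power_abs finite_measure_axioms)
  have intE: "integrable P (\<lambda>\<omega>. exp (c * W \<omega>))" for c
    using Wm exp_bound by (intro integrable_bounded_on_space) (auto simp: finite_measure_axioms)
  have "(\<integral>\<omega>. W \<omega> ^ (2 * R) \<partial>P)
      \<le> (\<integral>\<omega>. (real (2 * R) / (exp 1 * l)) ^ (2 * R) * (exp (l * W \<omega>) + exp (- (l * W \<omega>))) \<partial>P)"
    using intW intE[of l] intE[of "- l"] abs_power_le_exp_sum[OF l, of "2 * R"] R
    by (intro integral_mono) (auto simp: power_even_abs)
  also have "\<dots> = (real (2 * R) / (exp 1 * l)) ^ (2 * R)
      * ((\<integral>\<omega>. exp (l * W \<omega>) \<partial>P) + (\<integral>\<omega>. exp (- (l * W \<omega>)) \<partial>P))"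
    using intE[of l] intE[of "- l"] by simp
  finally show ?thesis .
qed

lemma PiM_mgf_centered_sum_le:
  fixes s :: "nat \<Rightarrow> 'a \<Rightarrow> real"
  assumes M: "prob_space M" and l: "l > 0"
    and meas: "\<And>i. i < m \<Longrightarrow> s i \<in> borel_measurable M"
    and bd: "\<And>i x. i < m \<Longrightarrow> x \<in> space M \<Longrightarrow> s i x \<in> {-1..1}"
  shows "(\<integral>\<omega>. exp (l * (\<Sum>i<m. s i (\<omega> i) - integral\<^sup>L M (s i))) \<partial>PiM {..<m} (\<lambda>_. M))
    \<le> exp (l\<^sup>2 / 2) ^ m"
proof -
  interpret prob_space M by fact
  interpret product_sigma_finite "\<lambda>_. M"
    by unfold_locales
  have centered: "s i x - integral\<^sup>L M (s i) \<le> 2" if "i < m" "x \<in> space M" for i x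
    using expectation_mem_Icc[OF meas bd, OF that(1) that(1)] bd[OF that] by simp
  have int: "integrable M (\<lambda>x. exp (l * (s i x - integral\<^sup>L M (s i))))" if "i < m" for i
  proof (rule integrable_bounded_on_space[where B = "exp (l * 2)"])
    show "\<bar>exp (l * (s i x - integral\<^sup>L M (s i)))\<bar> \<le> exp (l * 2)" if "x \<in> space M" for x
      using mult_left_mono[OF centered[OF \<open>i < m\<close> that], of l] l by simp
  qed (use meas[OF that] in \<open>auto simp: finite_measure_axioms\<close>)
  have "(\<integral>\<omega>. exp (l * (\<Sum>i<m. s i (\<omega> i) - integral\<^sup>L M (s i))) \<partial>PiM {..<m} (\<lambda>_. M))
      = (\<integral>\<omega>. (\<Prod>i<m. exp (l * (s i (\<omega> i) - integral\<^sup>L M (s i)))) \<partial>PiM {..<m} (\<lambda>_. M))"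
    by (simp add: sum_distrib_left exp_sum)
  also have "\<dots> = (\<Prod>i<m. (\<integral>x. exp (l * (s i x - integral\<^sup>L M (s i))) \<partial>M))"
    using int by (intro product_integral_prod) auto
  also have "\<dots> \<le> (\<Prod>i<m. exp (l\<^sup>2 / 2))"
    using meas bd l by (intro prod_mono conjI integral_nonneg Hoeffding_mgf_le[OF M]) auto
  finally show ?thesis
    by simp
qed

lemma PiM_centered_sum_moment_le:
  fixes s :: "nat \<Rightarrow> 'a \<Rightarrow> real"
  assumes M: "prob_space M" and m: "m > 0" and R: "R \<ge> 1"
    and meas: "\<And>i. i < m \<Longrightarrow> s i \<in> borel_measurable M"
    and bd: "\<And>i x. i < m \<Longrightarrow> x \<in> space M \<Longrightarrow> s i x \<in> {-1..1}"
  shows "(\<integral>\<omega>. (\<Sum>i<m. s i (\<omega> i) - integral\<^sup>L M (s i)) ^ (2 * R) \<partial>PiM {..<m} (\<lambda>_. M))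
    \<le> 2 * (2 * real R * real m / exp 1) ^ R"
proof -
  interpret prob_space M by fact
  let ?P = "PiM {..<m} (\<lambda>_. M)"
  define W where "W \<omega> = (\<Sum>i<m. s i (\<omega> i) - integral\<^sup>L M (s i))" for \<omega>
  \<comment> \<open>minimises (2R / (e l))^(2R) exp (m l^2 / 2)\<close>
  define l where "l = sqrt (2 * real R / real m)"
  have l: "l > 0" and l2: "l\<^sup>2 = 2 * real R / real m"
    using m R by (auto simp: l_def)
  have "W \<in> borel_measurable ?P"
    unfolding W_def using meas by measurable
  moreover have "\<bar>W \<omega>\<bar> \<le> 2 * real m" if "\<omega> \<in> space ?P" for \<omega>
  proof -
    have "integral\<^sup>L M (s i) \<in> {-1..1}" if "i < m" for i
      using meas[OF that] bd[OF that] by (rule expectation_mem_Icc)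
    then show ?thesis
      unfolding W_def using \<open>\<omega> \<in> space ?P\<close> bd by (intro abs_centered_sum_le) (auto simp: space_PiM)
  qed
  ultimately have "(\<integral>\<omega>. W \<omega> ^ (2 * R) \<partial>?P)
      \<le> (real (2 * R) / (exp 1 * l)) ^ (2 * R) * ((\<integral>\<omega>. exp (l * W \<omega>) \<partial>?P) + (\<integral>\<omega>. exp (- (l * W \<omega>)) \<partial>?P))"
    using l R by (intro even_moment_le_mgf prob_space_PiM) (auto simp: M)
  also have "\<dots> \<le> (real (2 * R) / (exp 1 * l)) ^ (2 * R) * (exp (l\<^sup>2 / 2) ^ m + exp (l\<^sup>2 / 2) ^ m)"
  proof -
    have "(\<integral>\<omega>. exp (- (l * W \<omega>)) \<partial>?P)
        = (\<integral>\<omega>. exp (l * (\<Sum>i<m. - s i (\<omega> i) - integral\<^sup>L M (\<lambda>x. - s i x))) \<partial>?P)"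
      by (simp add: W_def sum_subtractf algebra_simps)
    also have "\<dots> \<le> exp (l\<^sup>2 / 2) ^ m"
      using meas bd by (intro PiM_mgf_centered_sum_le[OF M l]) auto
    finally show ?thesis
      unfolding W_def using meas bd
      by (intro mult_left_mono add_mono PiM_mgf_centered_sum_le[OF M l]) auto
  qed
  also have "\<dots> = 2 * (2 * real R * real m / exp 1) ^ R"
  proof -
    have "(real (2 * R) / (exp 1 * l))\<^sup>2 = 2 * real R * real m / (exp 1)\<^sup>2"
      unfolding power_divide power_mult_distrib l2 using m R by (simp add: field_simps power2_eq_square)
    then have "(real (2 * R) / (exp 1 * l)) ^ (2 * R) = (2 * real R * real m / (exp 1)\<^sup>2) ^ R"
      by (simp add: power_mult)
    moreover have "exp (l\<^sup>2 / 2) ^ m = exp 1 ^ R"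
      using m by (simp add: exp_of_nat_mult[symmetric] l2)
    ultimately show ?thesis
      by (simp add: power_mult_distrib[symmetric] power2_eq_square)
  qed
  finally show ?thesis
    unfolding W_def .
qed

section \<open>Approximately independent signs\<close>

lemma integral_eq_sum_level_sets:
  fixes t :: "'i \<Rightarrow> 'b \<Rightarrow> real" and G :: "('i \<Rightarrow> real) \<Rightarrow> real"
  assumes P: "finite_measure P" and S: "finite S" and V: "finite V"
    and meas: "\<And>i. i \<in> S \<Longrightarrow> t i \<in> borel_measurable P"
    and vals: "\<And>i \<omega>. i \<in> S \<Longrightarrow> \<omega> \<in> space P \<Longrightarrow> t i \<omega> \<in> V"
  shows "(\<integral>\<omega>. G (restrict (\<lambda>i. t i \<omega>) S) \<partial>P)
    = (\<Sum>v\<in>S \<rightarrow>\<^sub>E V. G v * measure P {\<omega>\<in>space P. \<forall>i\<in>S. t i \<omega> = v i})"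
proof -
  interpret finite_measure P by fact
  let ?A = "\<lambda>v. {\<omega>\<in>space P. \<forall>i\<in>S. t i \<omega> = v i}"
  have sets: "?A v \<in> sets P" for v
    using S meas by (intro sets.sets_Collect_finite_All sets_Collect_eq_real) auto
  have "G (restrict (\<lambda>i. t i \<omega>) S) = (\<Sum>v\<in>S \<rightarrow>\<^sub>E V. G v * indicator (?A v) \<omega>)"
    if \<omega>: "\<omega> \<in> space P" for \<omega>
  proof -
    have "indicator (?A v) \<omega> = (if v = restrict (\<lambda>i. t i \<omega>) S then 1 else (0::real))"
      if "v \<in> S \<rightarrow>\<^sub>E V" for v
      using that \<omega> by (auto simp: indicator_def PiE_iff extensional_def fun_eq_iff) metis
    then have "(\<Sum>v\<in>S \<rightarrow>\<^sub>E V. G v * indicator (?A v) \<omega>)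
        = (\<Sum>v\<in>S \<rightarrow>\<^sub>E V. if v = restrict (\<lambda>i. t i \<omega>) S then G v else 0)"
      by (intro sum.cong) auto
    also have "\<dots> = G (restrict (\<lambda>i. t i \<omega>) S)"
      using vals \<omega> S V by (simp add: sum.delta finite_PiE)
    finally show ?thesis
      by simp
  qed
  then have "(\<integral>\<omega>. G (restrict (\<lambda>i. t i \<omega>) S) \<partial>P) = (\<integral>\<omega>. (\<Sum>v\<in>S \<rightarrow>\<^sub>E V. G v * indicator (?A v) \<omega>) \<partial>P)"
    by (intro Bochner_Integration.integral_cong) auto
  also have "\<dots> = (\<Sum>v\<in>S \<rightarrow>\<^sub>E V. G v * measure P (?A v))"
    using sets by (subst Bochner_Integration.integral_sum) (auto simp: integrable_indicator_iff less_top[symmetric])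
  finally show ?thesis .
qed

lemma integral_PiM_eq_sum_level_sets:
  fixes s :: "'i \<Rightarrow> 'a \<Rightarrow> real" and G :: "('i \<Rightarrow> real) \<Rightarrow> real"
  assumes M: "prob_space M" and I: "finite I" and S: "S \<subseteq> I" and V: "finite V"
    and meas: "\<And>i. i \<in> S \<Longrightarrow> s i \<in> borel_measurable M"
    and vals: "\<And>i x. i \<in> S \<Longrightarrow> x \<in> space M \<Longrightarrow> s i x \<in> V"
  shows "(\<integral>\<omega>. G (restrict (\<lambda>i. s i (\<omega> i)) S) \<partial>PiM I (\<lambda>_. M))
    = (\<Sum>v\<in>S \<rightarrow>\<^sub>E V. G v * (\<Prod>i\<in>S. measure M {x\<in>space M. s i x = v i}))"
proof -
  interpret M: prob_space M by fact
  interpret product_prob_space "\<lambda>_. M" I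
    by unfold_locales
  let ?P = "PiM I (\<lambda>_. M)"
  have S_fin: "finite S"
    using S I by (rule finite_subset)
  have meas_P: "(\<lambda>\<omega>. s i (\<omega> i)) \<in> borel_measurable ?P" if "i \<in> S" for i
    using measurable_component_singleton[of i I "\<lambda>_. M"] meas[OF that] S that
    by (auto intro: measurable_compose)
  have "(\<integral>\<omega>. G (restrict (\<lambda>i. s i (\<omega> i)) S) \<partial>?P)
      = (\<Sum>v\<in>S \<rightarrow>\<^sub>E V. G v * measure ?P {\<omega>\<in>space ?P. \<forall>i\<in>S. s i (\<omega> i) = v i})"
    using S_fin V meas_P vals S
    by (intro integral_eq_sum_level_sets) (auto simp: space_PiM PiE_iff subset_iff finite_measure_axioms)
  also have "\<dots> = (\<Sum>v\<in>S \<rightarrow>\<^sub>E V. G v * (\<Prod>i\<in>S. measure M {x\<in>space M. s i x = v i}))"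
  proof (intro sum.cong arg_cong2[where f = "(*)"] refl)
    fix v
    define A where "A i = {x\<in>space M. s i x = v i}" for i
    have A: "A i \<in> sets M" if "i \<in> S" for i
      unfolding A_def using meas[OF that] by (rule sets_Collect_eq_real)
    have "{\<omega>\<in>space ?P. \<forall>i\<in>S. s i (\<omega> i) = v i} = {\<omega>\<in>space ?P. \<forall>i\<in>S. \<omega> i \<in> A i}"
      using S by (auto simp: space_PiM A_def)
    moreover have "measure ?P {\<omega>\<in>space ?P. \<forall>i\<in>S. \<omega> i \<in> A i} = (\<Prod>i\<in>S. measure M (A i))"
      using emeasure_PiM_Collect[OF S S_fin A]
      by (simp add: emeasure_eq_measure M.emeasure_eq_measure prod_ennreal measure_nonneg prod_nonneg)
    ultimately show "measure ?P {\<omega>\<in>space ?P. \<forall>i\<in>S. s i (\<omega> i) = v i}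
        = (\<Prod>i\<in>S. measure M {x\<in>space M. s i x = v i})"
      by (simp add: A_def)
  qed
  finally show ?thesis .
qed

definition approx_indep :: "'a measure \<Rightarrow> real \<Rightarrow> nat \<Rightarrow> (nat \<Rightarrow> 'a \<Rightarrow> real) \<Rightarrow> bool" where
  "approx_indep M \<beta> m s \<longleftrightarrow>
     (\<forall>S v. S \<subseteq> {..<m} \<longrightarrow>
        \<bar>measure M {x\<in>space M. \<forall>i\<in>S. s i x = v i} - (\<Prod>i\<in>S. measure M {x\<in>space M. s i x = v i})\<bar>
          \<le> real (card S) * \<beta>)"

lemma approx_indep_integral_diff:
  fixes s :: "nat \<Rightarrow> 'a \<Rightarrow> real" and G :: "(nat \<Rightarrow> real) \<Rightarrow> real"
  assumes M: "prob_space M" and ai: "approx_indep M \<beta> m s" and S: "S \<subseteq> {..<m}"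
    and meas: "\<And>i. i < m \<Longrightarrow> s i \<in> borel_measurable M"
    and V: "finite V" and vals: "\<And>i x. i < m \<Longrightarrow> x \<in> space M \<Longrightarrow> s i x \<in> V"
    and G: "\<And>v. v \<in> S \<rightarrow>\<^sub>E V \<Longrightarrow> \<bar>G v\<bar> \<le> C"
  shows "\<bar>(\<integral>x. G (restrict (\<lambda>i. s i x) S) \<partial>M)
           - (\<integral>\<omega>. G (restrict (\<lambda>i. s i (\<omega> i)) S) \<partial>PiM {..<m} (\<lambda>_. M))\<bar>
    \<le> real (card V) ^ card S * C * (real (card S) * \<beta>)"
proof -
  let ?\<Delta> = "\<lambda>v. measure M {x\<in>space M. \<forall>i\<in>S. s i x = v i} - (\<Prod>i\<in>S. measure M {x\<in>space M. s i x = v i})"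
  have S_fin: "finite S"
    using S finite_subset by blast
  have "(\<integral>x. G (restrict (\<lambda>i. s i x) S) \<partial>M)
      = (\<Sum>v\<in>S \<rightarrow>\<^sub>E V. G v * measure M {x\<in>space M. \<forall>i\<in>S. s i x = v i})"
    using M S_fin V meas vals S by (intro integral_eq_sum_level_sets) (auto simp: prob_space_def)
  moreover have "(\<integral>\<omega>. G (restrict (\<lambda>i. s i (\<omega> i)) S) \<partial>PiM {..<m} (\<lambda>_. M))
      = (\<Sum>v\<in>S \<rightarrow>\<^sub>E V. G v * (\<Prod>i\<in>S. measure M {x\<in>space M. s i x = v i}))"
    using M S V meas vals by (intro integral_PiM_eq_sum_level_sets) auto
  ultimately have "\<bar>(\<integral>x. G (restrict (\<lambda>i. s i x) S) \<partial>M)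
      - (\<integral>\<omega>. G (restrict (\<lambda>i. s i (\<omega> i)) S) \<partial>PiM {..<m} (\<lambda>_. M))\<bar>
      \<le> (\<Sum>v\<in>S \<rightarrow>\<^sub>E V. \<bar>G v\<bar> * \<bar>?\<Delta> v\<bar>)"
    by (simp add: sum_subtractf[symmetric] right_diff_distrib sum_abs abs_mult flip: abs_mult)
  also have "\<dots> \<le> (\<Sum>v\<in>S \<rightarrow>\<^sub>E V. C * (real (card S) * \<beta>))"
  proof (rule sum_mono)
    fix v
    assume v: "v \<in> S \<rightarrow>\<^sub>E V"
    have "\<bar>?\<Delta> v\<bar> \<le> real (card S) * \<beta>"
      using ai S unfolding approx_indep_def by blast
    then show "\<bar>G v\<bar> * \<bar>?\<Delta> v\<bar> \<le> C * (real (card S) * \<beta>)"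
      using G[OF v] order.trans[OF abs_ge_zero G[OF v]] by (intro mult_mono) auto
  qed
  also have "\<dots> = real (card V) ^ card S * C * (real (card S) * \<beta>)"
    using S_fin V by (simp add: card_PiE prod_constant)
  finally show ?thesis .
qed

lemma integral_centered_sum_power:
  fixes t :: "nat \<Rightarrow> 'b \<Rightarrow> real" and \<mu> :: "nat \<Rightarrow> real"
  assumes N: "prob_space N" and meas: "\<And>i. i < m \<Longrightarrow> t i \<in> borel_measurable N"
    and bd: "\<And>i \<omega>. i < m \<Longrightarrow> \<omega> \<in> space N \<Longrightarrow> t i \<omega> \<in> {-1..1}"
    and \<mu>: "\<And>i. i < m \<Longrightarrow> \<mu> i \<in> {-1..1}"
  shows "(\<integral>\<omega>. (\<Sum>i<m. t i \<omega> - \<mu> i) ^ n \<partial>N)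
    = (\<Sum>f\<in>{..<n} \<rightarrow>\<^sub>E {..<m}. \<integral>\<omega>. (\<Prod>j<n. t (f j) \<omega> - \<mu> (f j)) \<partial>N)"
proof -
  have "integrable N (\<lambda>\<omega>. \<Prod>j<n. t (f j) \<omega> - \<mu> (f j))" if f: "f \<in> {..<n} \<rightarrow>\<^sub>E {..<m}" for f
  proof (rule integrable_bounded_on_space)
    have "f j < m" if "j < n" for j
      using f that by auto
    then show "\<bar>\<Prod>j<n. t (f j) \<omega> - \<mu> (f j)\<bar> \<le> 2 ^ n" if "\<omega> \<in> space N" for \<omega>
      using bd \<mu> that by (intro abs_centered_monomial_le) auto
  qed (use N meas f in \<open>auto simp: prob_space_def PiE_iff\<close>)
  then show ?thesis
    unfolding power_sum_eq_sum_PiE by (intro Bochner_Integration.integral_sum)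
qed

lemma approx_indep_monomial_diff:
  fixes s :: "nat \<Rightarrow> 'a \<Rightarrow> real" and \<mu> :: "nat \<Rightarrow> real"
  assumes M: "prob_space M" and ai: "approx_indep M \<beta> m s" and \<beta>: "\<beta> \<ge> 0"
    and meas: "\<And>i. i < m \<Longrightarrow> s i \<in> borel_measurable M"
    and vals: "\<And>i x. i < m \<Longrightarrow> x \<in> space M \<Longrightarrow> s i x \<in> {-1, 0, 1}"
    and \<mu>: "\<And>i. i < m \<Longrightarrow> \<mu> i \<in> {-1..1}" and f: "f \<in> {..<n} \<rightarrow>\<^sub>E {..<m}"
  shows "\<bar>(\<integral>x. (\<Prod>j<n. s (f j) x - \<mu> (f j)) \<partial>M)
           - (\<integral>\<omega>. (\<Prod>j<n. s (f j) (\<omega> (f j)) - \<mu> (f j)) \<partial>PiM {..<m} (\<lambda>_. M))\<bar>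
    \<le> 6 ^ n * real n * \<beta>"
proof -
  define S where "S = f ` {..<n}"
  define G where "G v = (\<Prod>j<n. v (f j) - \<mu> (f j))" for v :: "nat \<Rightarrow> real"
  have S: "S \<subseteq> {..<m}" "card S \<le> n"
    using f card_image_le[of "{..<n}" f] by (auto simp: S_def)
  have "\<bar>(\<integral>x. G (restrict (\<lambda>i. s i x) S) \<partial>M) - (\<integral>\<omega>. G (restrict (\<lambda>i. s i (\<omega> i)) S) \<partial>PiM {..<m} (\<lambda>_. M))\<bar>
      \<le> real (card {-1, 0, 1::real}) ^ card S * 2 ^ n * (real (card S) * \<beta>)"
  proof (rule approx_indep_integral_diff[OF M ai S(1) meas _ vals])
    show "\<bar>G v\<bar> \<le> 2 ^ n" if v: "v \<in> S \<rightarrow>\<^sub>E {-1, 0, 1}" for v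
    proof -
      have "v (f j) \<in> {-1..1} \<and> \<mu> (f j) \<in> {-1..1}" if "j < n" for j
      proof -
        have "f j \<in> S" "f j < m"
          using that f by (auto simp: S_def)
        then show ?thesis
          using PiE_mem[OF v] \<mu> by fastforce
      qed
      then show ?thesis
        unfolding G_def by (rule abs_centered_monomial_le)
    qed
  qed auto
  also have "\<dots> \<le> 3 ^ n * 2 ^ n * (real n * \<beta>)"
    using S(2) \<beta> by (intro mult_mono power_increasing) auto
  also have "\<dots> = 6 ^ n * real n * \<beta>"
    by (simp add: power_mult_distrib[symmetric])
  finally show ?thesis
    by (simp add: G_def S_def)
qed

(* Each of the m^n monomials of W^n involves at most n of the s_i, whose joint law is within
   n \<beta> of the product law on each of at most 3^n atoms. *)
lemma approx_indep_moment_diff: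
  fixes s :: "nat \<Rightarrow> 'a \<Rightarrow> real"
  assumes M: "prob_space M" and ai: "approx_indep M \<beta> m s" and \<beta>: "\<beta> \<ge> 0"
    and meas: "\<And>i. i < m \<Longrightarrow> s i \<in> borel_measurable M"
    and vals: "\<And>i x. i < m \<Longrightarrow> x \<in> space M \<Longrightarrow> s i x \<in> {-1, 0, 1}"
  shows "\<bar>(\<integral>x. (\<Sum>i<m. s i x - integral\<^sup>L M (s i)) ^ n \<partial>M)
           - (\<integral>\<omega>. (\<Sum>i<m. s i (\<omega> i) - integral\<^sup>L M (s i)) ^ n \<partial>PiM {..<m} (\<lambda>_. M))\<bar>
    \<le> real m ^ n * 6 ^ n * real n * \<beta>"
proof -
  interpret prob_space M by fact
  let ?P = "PiM {..<m} (\<lambda>_. M)"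
  let ?D = "{..<n} \<rightarrow>\<^sub>E {..<m}"
  have P: "prob_space ?P"
    by (intro prob_space_PiM) (simp add: M)
  have bd: "s i x \<in> {-1..1}" if "i < m" "x \<in> space M" for i x
    using vals[OF that] by auto
  then have \<mu>: "integral\<^sup>L M (s i) \<in> {-1..1}" if "i < m" for i
    using meas[OF that] that by (intro expectation_mem_Icc) auto
  have "(\<integral>x. (\<Sum>i<m. s i x - integral\<^sup>L M (s i)) ^ n \<partial>M)
      = (\<Sum>f\<in>?D. \<integral>x. (\<Prod>j<n. s (f j) x - integral\<^sup>L M (s (f j))) \<partial>M)"
    using meas bd \<mu> by (intro integral_centered_sum_power[OF M]) auto
  moreover have "(\<integral>\<omega>. (\<Sum>i<m. s i (\<omega> i) - integral\<^sup>L M (s i)) ^ n \<partial>?P)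
      = (\<Sum>f\<in>?D. \<integral>\<omega>. (\<Prod>j<n. s (f j) (\<omega> (f j)) - integral\<^sup>L M (s (f j))) \<partial>?P)"
    using meas bd \<mu> by (intro integral_centered_sum_power[OF P]) (auto simp: space_PiM PiE_iff)
  ultimately have "\<bar>(\<integral>x. (\<Sum>i<m. s i x - integral\<^sup>L M (s i)) ^ n \<partial>M)
      - (\<integral>\<omega>. (\<Sum>i<m. s i (\<omega> i) - integral\<^sup>L M (s i)) ^ n \<partial>?P)\<bar>
      \<le> (\<Sum>f\<in>?D. \<bar>(\<integral>x. (\<Prod>j<n. s (f j) x - integral\<^sup>L M (s (f j))) \<partial>M)
          - (\<integral>\<omega>. (\<Prod>j<n. s (f j) (\<omega> (f j)) - integral\<^sup>L M (s (f j))) \<partial>?P)\<bar>)"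
    by (simp add: sum_subtractf[symmetric] sum_abs)
  also have "\<dots> \<le> (\<Sum>f\<in>?D. 6 ^ n * real n * \<beta>)"
    using M ai \<beta> meas vals \<mu> by (intro sum_mono approx_indep_monomial_diff) auto
  also have "\<dots> = real m ^ n * 6 ^ n * real n * \<beta>"
    by (simp add: card_PiE)
  finally show ?thesis .
qed

lemma exp_1_gt_27: "exp (1::real) > 2.7"
proof -
  have "\<bar>exp (1::real) - 5837465777 / 2147483648\<bar> \<le> inverse (2 ^ 32)"
    by (rule e_approx_32)
  then show ?thesis
    unfolding abs_le_iff by simp
qed

(* Nearly tight at q = 2, where 2 q + 4 \<le> 2.7 (4 q - 5) needs exp 1 > 2.7. *)
lemma Hoeffding_term_le:
  fixes q K :: real
  assumes q: "q \<ge> 2" and R: "R = nat \<lceil>q / 2\<rceil>" and K: "K > 4 * q - 5"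
  shows "4 * (2 * real R / (exp 1 * K)) ^ R \<le> 1"
proof -
  define x where "x = 2 * real R / (exp 1 * K)"
  have R_bounds: "q / 2 \<le> real R" "real R < q / 2 + 1" "R \<ge> 1"
    using R q by linarith+
  have e: "exp (1::real) > 2.7"
    by (rule exp_1_gt_27)
  have K3: "K > 3"
    using K q by linarith
  have x0: "x \<ge> 0"
    using K3 by (simp add: x_def)
  have "4 * real R \<le> exp 1 * K"
  proof -
    have "4 * real R < 2 * q + 4"
      using R_bounds by linarith
    also have "\<dots> \<le> 2.7 * (4 * q - 5)"
      using q by (simp add: algebra_simps)
    also have "\<dots> \<le> exp 1 * K"
      using e K q by (intro mult_mono) auto
    finally show ?thesis
      by linarith
  qed
  then have x_half: "x \<le> 1 / 2"
    using K3 e by (simp add: x_def field_simps)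
  show ?thesis
  proof (cases "R = 1")
    case True
    have "8 \<le> exp 1 * K"
      using e K3 mult_strict_mono[OF e K3] by linarith
    then show ?thesis
      unfolding x_def[symmetric] using True K3 e by (simp add: x_def field_simps)
  next
    case False
    then have "x ^ R \<le> x ^ 2"
      using x0 x_half R_bounds by (intro power_decreasing) auto
    also have "\<dots> \<le> (1 / 2) ^ 2"
      using x0 x_half by (intro power_mono) auto
    finally show ?thesis
      unfolding x_def[symmetric] by (simp add: power2_eq_square)
  qed
qed

(* Here beta_par p \<epsilon> = (\<epsilon> / 10) powr (10 (q - 1)), and 10 (q - 1) \<ge> 5 R. *)
lemma dissociation_term_lt:
  fixes p q \<epsilon> :: real
  assumes p: "1 < p" "p \<le> 2" and \<epsilon>: "0 < \<epsilon>" "\<epsilon> \<le> 1"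
    and q_def: "q = p / (p - 1)" and R: "R = nat \<lceil>q / 2\<rceil>"
  shows "4 * real R * 6 ^ (2 * R) * beta_par p \<epsilon> < \<epsilon> ^ (4 * R)"
proof -
  have q: "q \<ge> 2" "10 / (p - 1) = 10 * (q - 1)"
    using p by (auto simp: q_def field_simps)
  have R_bounds: "real R < q / 2 + 1" "R \<ge> 1"
    using R q by linarith+
  have "beta_par p \<epsilon> = \<epsilon> powr (10 * (q - 1)) / 10 powr (10 * (q - 1))"
    using \<epsilon> q by (simp add: beta_par_def powr_divide)
  also have "\<dots> \<le> \<epsilon> powr real (4 * R) / 10 powr real (5 * R)"
    using R_bounds q \<epsilon> by (intro frac_le powr_mono' powr_mono) auto
  also have "\<dots> = \<epsilon> ^ (4 * R) / 10 ^ (5 * R)"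
    using \<epsilon> by (simp only: powr_realpow)
  also have "\<dots> = \<epsilon> ^ (4 * R) / 100000 ^ R"
    by (simp add: power_mult)
  finally have \<beta>: "beta_par p \<epsilon> \<le> \<epsilon> ^ (4 * R) / 100000 ^ R" .
  have "4 * real R * 36 ^ R < (100000::real) ^ R"
  proof -
    have "4 * real R * 36 ^ R \<le> 4 ^ R * 2 ^ R * (36::real) ^ R"
      using less_exp[of R] power_increasing[of 1 R "4::real"] R_bounds
      by (intro mult_right_mono mult_mono) auto
    also have "\<dots> = 288 ^ R"
      by (simp add: power_mult_distrib[symmetric])
    also have "\<dots> < 100000 ^ R"
      using R_bounds by (intro power_strict_mono) auto
    finally show ?thesis .
  qed
  then have "4 * real R * 36 ^ R * (\<epsilon> ^ (4 * R) / 100000 ^ R) < \<epsilon> ^ (4 * R)"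
    using \<epsilon> by (simp add: field_simps)
  moreover have "(6::real) ^ (2 * R) = 36 ^ R"
    by (simp add: power_mult)
  then have "4 * real R * 6 ^ (2 * R) * beta_par p \<epsilon> \<le> 4 * real R * 36 ^ R * (\<epsilon> ^ (4 * R) / 100000 ^ R)"
    using \<beta> by (metis mult_left_mono mult_nonneg_nonneg of_nat_0_le_iff zero_le_numeral zero_le_power)
  ultimately show ?thesis
    by linarith
qed

lemma approx_indep_centered_moment_lt:
  fixes s :: "nat \<Rightarrow> 'a \<Rightarrow> real" and p q \<epsilon> :: real
  assumes M: "prob_space M" and p: "1 < p" "p \<le> 2" and \<epsilon>: "0 < \<epsilon>" "\<epsilon> \<le> 1"
    and q: "q = p / (p - 1)" and R: "R = nat \<lceil>q / 2\<rceil>"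
    and m: "4 / (p - 1) - 1 < real m * \<epsilon> ^ 4"
    and ai: "approx_indep M (beta_par p \<epsilon>) m s"
    and meas: "\<And>i. i < m \<Longrightarrow> s i \<in> borel_measurable M"
    and vals: "\<And>i x. i < m \<Longrightarrow> x \<in> space M \<Longrightarrow> s i x \<in> {-1, 0, 1}"
  shows "(\<integral>x. (\<Sum>i<m. s i x - integral\<^sup>L M (s i)) ^ (2 * R) \<partial>M) < (real m * \<epsilon>\<^sup>2) ^ (2 * R)"
proof -
  define K where "K = real m * \<epsilon> ^ 4"
  have q2: "q \<ge> 2"
    using p by (simp add: q le_divide_eq)
  have "4 * q - 5 = 4 / (p - 1) - 1"
    using p by (simp add: q field_simps)
  then have K: "K > 4 * q - 5"
    using m by (simp add: K_def)
  have m0: "m > 0"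
    using K q2 by (cases m) (auto simp: K_def)
  have R1: "R \<ge> 1"
    using R q2 by linarith
  have \<beta>: "beta_par p \<epsilon> \<ge> 0"
    by (simp add: beta_par_def)
  have total: "(real m * \<epsilon>\<^sup>2) ^ (2 * R) = (real m * K) ^ R"
    by (simp add: K_def power_mult power2_eq_square algebra_simps power4_eq_xxxx)
  have "2 * real R * real m / exp 1 = real m * K * (2 * real R / (exp 1 * K))"
    using K q2 by simp
  then have "2 * (2 * real R * real m / exp 1) ^ R = (real m * K) ^ R * (4 * (2 * real R / (exp 1 * K)) ^ R) / 2"
    by (simp only: power_mult_distrib)
  also have "\<dots> \<le> (real m * K) ^ R / 2"
    using Hoeffding_term_le[OF q2 R K] K q2 by (intro divide_right_mono mult_left_le) auto
  finally have Hoeffding_part: "2 * (2 * real R * real m / exp 1) ^ R \<le> (real m * \<epsilon>\<^sup>2) ^ (2 * R) / 2"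
    unfolding total .
  have "real m ^ (2 * R) * 6 ^ (2 * R) * real (2 * R) * beta_par p \<epsilon>
      = real m ^ (2 * R) * (4 * real R * 6 ^ (2 * R) * beta_par p \<epsilon>) / 2"
    by simp
  also have "\<dots> < real m ^ (2 * R) * \<epsilon> ^ (4 * R) / 2"
    using dissociation_term_lt[OF p \<epsilon> q R] m0 by (intro divide_strict_right_mono mult_strict_left_mono) auto
  also have "\<dots> = (real m * \<epsilon>\<^sup>2) ^ (2 * R) / 2"
    by (simp add: power_mult_distrib power_mult[symmetric] mult.commute)
  finally have dissociation_part:
    "real m ^ (2 * R) * 6 ^ (2 * R) * real (2 * R) * beta_par p \<epsilon> < (real m * \<epsilon>\<^sup>2) ^ (2 * R) / 2" .
  have "(\<integral>\<omega>. (\<Sum>i<m. s i (\<omega> i) - integral\<^sup>L M (s i)) ^ (2 * R) \<partial>PiM {..<m} (\<lambda>_. M))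
      \<le> 2 * (2 * real R * real m / exp 1) ^ R"
    using meas vals by (intro PiM_centered_sum_moment_le[OF M m0 R1]) force+
  moreover have "\<bar>(\<integral>x. (\<Sum>i<m. s i x - integral\<^sup>L M (s i)) ^ (2 * R) \<partial>M)
      - (\<integral>\<omega>. (\<Sum>i<m. s i (\<omega> i) - integral\<^sup>L M (s i)) ^ (2 * R) \<partial>PiM {..<m} (\<lambda>_. M))\<bar>
      \<le> real m ^ (2 * R) * 6 ^ (2 * R) * real (2 * R) * beta_par p \<epsilon>"
    by (rule approx_indep_moment_diff[OF M ai \<beta> meas vals])
  ultimately show ?thesis
    using Hoeffding_part dissociation_part by linarith
qed

lemma sum_integral_mult_eq_integral_mult_centered:
  fixes Y :: "'a \<Rightarrow> real" and s :: "nat \<Rightarrow> 'a \<Rightarrow> real"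
  assumes "prob_space M" and Y: "integrable M Y" and EY: "integral\<^sup>L M Y = 0"
    and meas: "\<And>i. i < m \<Longrightarrow> s i \<in> borel_measurable M"
    and bd: "\<And>i x. i < m \<Longrightarrow> x \<in> space M \<Longrightarrow> \<bar>s i x\<bar> \<le> 1"
  shows "(\<Sum>i<m. \<integral>\<omega>. Y \<omega> * s i \<omega> \<partial>M) = (\<integral>\<omega>. Y \<omega> * (\<Sum>i<m. s i \<omega> - integral\<^sup>L M (s i)) \<partial>M)"
proof -
  have int: "integrable M (\<lambda>\<omega>. Y \<omega> * s i \<omega>)" if "i < m" for i
    using Y meas[OF that] bd[OF that] by (rule integrable_mult_bounded)
  have "(\<Sum>i<m. \<integral>\<omega>. Y \<omega> * s i \<omega> \<partial>M) = (\<Sum>i<m. (\<integral>\<omega>. Y \<omega> * s i \<omega> \<partial>M) - integral\<^sup>L M Y * integral\<^sup>L M (s i))"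
    by (simp add: EY)
  also have "\<dots> = (\<integral>\<omega>. Y \<omega> * (\<Sum>i<m. s i \<omega> - integral\<^sup>L M (s i)) \<partial>M)"
    using int Y by (simp add: sum_distrib_left right_diff_distrib Bochner_Integration.integral_sum
        Bochner_Integration.integral_diff)
  finally show ?thesis .
qed

lemma approx_indep_correlation_lt:
  fixes Y :: "'a \<Rightarrow> real" and s :: "nat \<Rightarrow> 'a \<Rightarrow> real" and p \<epsilon> :: real
  assumes M: "prob_space M" and p: "1 < p" "p \<le> 2" and \<epsilon>: "0 < \<epsilon>" "\<epsilon> \<le> 1"
    and m: "4 / (p - 1) - 1 < real m * \<epsilon> ^ 4"
    and Y: "Y \<in> borel_measurable M" and EY: "integral\<^sup>L M Y = 0"
    and intY: "integrable M (\<lambda>\<omega>. \<bar>Y \<omega>\<bar> powr p)"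
    and normY: "(\<integral>\<omega>. \<bar>Y \<omega>\<bar> powr p \<partial>M) powr (1 / p) = 1"
    and ai: "approx_indep M (beta_par p \<epsilon>) m s"
    and meas: "\<And>i. i < m \<Longrightarrow> s i \<in> borel_measurable M"
    and vals: "\<And>i x. i < m \<Longrightarrow> x \<in> space M \<Longrightarrow> s i x \<in> {-1, 0, 1}"
  shows "(\<Sum>i<m. \<integral>\<omega>. Y \<omega> * s i \<omega> \<partial>M) < real m * \<epsilon>\<^sup>2"
proof -
  interpret prob_space M by fact
  define q where "q = p / (p - 1)"
  define R where "R = nat \<lceil>q / 2\<rceil>"
  define W where "W \<omega> = (\<Sum>i<m. s i \<omega> - integral\<^sup>L M (s i))" for \<omega>
  have Y_int: "integrable M Y"
    using finite_measure_axioms Y _ intY by (rule integrable_of_integrable_abs_powr) (use p in simp)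
  have bd: "s i x \<in> {-1..1}" if "i < m" "x \<in> space M" for i x
    using vals[OF that] by auto
  have W: "W \<in> borel_measurable M"
    unfolding W_def using meas by measurable
  have "integral\<^sup>L M (s i) \<in> {-1..1}" if "i < m" for i
    using meas[OF that] bd[OF that] by (rule expectation_mem_Icc)
  then have W_bound: "\<bar>W \<omega>\<bar> \<le> 2 * real m" if "\<omega> \<in> space M" for \<omega>
    unfolding W_def using bd that by (intro abs_centered_sum_le) auto
  have "(\<Sum>i<m. \<integral>\<omega>. Y \<omega> * s i \<omega> \<partial>M) = (\<integral>\<omega>. Y \<omega> * W \<omega> \<partial>M)"
    unfolding W_def using M Y_int EY meas bd
    by (intro sum_integral_mult_eq_integral_mult_centered) (auto simp: abs_le_iff)
  also have "\<dots> < real m * \<epsilon>\<^sup>2"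
  proof (rule integral_mult_lt_of_moment_lt[OF M p(1) _ _ intY])
    show "p / (p - 1) \<le> 2 * real R"
      using real_nat_ceiling_ge[of "q / 2"] unfolding R_def[symmetric] q_def[symmetric] by linarith
    have "m > 0"
      using m p by (cases m) (auto simp: field_simps)
    then show "real m * \<epsilon>\<^sup>2 > 0"
      using \<epsilon> by simp
    show "(\<integral>\<omega>. \<bar>Y \<omega>\<bar> powr p \<partial>M) = 1"
      using p by (intro powr_inverse_eq_1D[OF _ _ normY]) auto
    have "\<bar>W \<omega> ^ (2 * R)\<bar> \<le> (2 * real m) ^ (2 * R)" if "\<omega> \<in> space M" for \<omega>
      using power_mono[OF W_bound[OF that], of "2 * R"] by (simp add: power_abs)
    then show "integrable M (\<lambda>\<omega>. W \<omega> ^ (2 * R))"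
      using W by (intro integrable_bounded_on_space) (auto simp: finite_measure_axioms)
    show "integrable M (\<lambda>\<omega>. Y \<omega> * W \<omega>)"
      using Y_int W W_bound by (rule integrable_mult_bounded)
    show "(\<integral>\<omega>. W \<omega> ^ (2 * R) \<partial>M) < (real m * \<epsilon>\<^sup>2) ^ (2 * R)"
      unfolding W_def by (rule approx_indep_centered_moment_lt[OF M p \<epsilon> q_def R_def m ai meas vals])
  qed
  finally show ?thesis .
qed

section \<open>Dissociated arrays\<close>

lemma array_sigma_generators_subset:
  "(\<Union>s\<in>dsubsets J d. {X s -` A \<inter> space M | A. A \<in> sets N}) \<subseteq> Pow (space M)"
  by auto

lemma space_array_sigma [simp]: "space (array_sigma M N d X J) = space M"
  unfolding array_sigma_def using array_sigma_generators_subset by (rule space_measure_of)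

lemma sets_array_sigma:
  "sets (array_sigma M N d X J) = sigma_sets (space M) (\<Union>s\<in>dsubsets J d. {X s -` A \<inter> space M | A. A \<in> sets N})"
  unfolding array_sigma_def using array_sigma_generators_subset by (rule sets_measure_of)

lemma sets_array_sigma_mono:
  assumes "J \<subseteq> J'"
  shows "sets (array_sigma M N d X J) \<subseteq> sets (array_sigma M N d X J')"
  unfolding sets_array_sigma using assms
  by (intro sigma_sets_mono') (auto simp: dsubsets_def)

lemma subalgebra_array_sigma:
  assumes J: "J \<subseteq> {1..n}" and X: "\<And>s. s \<in> dsubsets {1..n} d \<Longrightarrow> X s \<in> M \<rightarrow>\<^sub>M N"
  shows "subalgebra M (array_sigma M N d X J)"
proof -
  have "(\<Union>s\<in>dsubsets J d. {X s -` A \<inter> space M | A. A \<in> sets N}) \<subseteq> sets M"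
    using J X by (auto simp: dsubsets_def intro!: measurable_sets)
  then have "sets (array_sigma M N d X J) \<subseteq> sets M"
    unfolding sets_array_sigma by (rule sets.sigma_sets_subset)
  then show ?thesis
    by (simp add: subalgebra_def)
qed

lemma Collect_all_eq_in_array_sigma:
  fixes s :: "nat \<Rightarrow> 'a \<Rightarrow> real"
  assumes S: "finite S" and s: "\<And>i. i \<in> S \<Longrightarrow> s i \<in> borel_measurable (array_sigma M N d X (J i))"
  shows "{x\<in>space M. \<forall>i\<in>S. s i x = v i} \<in> sets (array_sigma M N d X (\<Union>i\<in>S. J i))"
proof -
  let ?F = "array_sigma M N d X"
  have "{x\<in>space M. s i x = v i} \<in> sets (?F (\<Union>i\<in>S. J i))" if i: "i \<in> S" for i
  proof -
    have "{x\<in>space M. s i x = v i} \<in> sets (?F (J i))"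
      using sets_Collect_eq_real[OF s[OF i]] by simp
    also have "\<dots> \<subseteq> sets (?F (\<Union>i\<in>S. J i))"
      using i by (intro sets_array_sigma_mono) auto
    finally show ?thesis .
  qed
  then show ?thesis
    using sets.sets_Collect_finite_All[OF _ S, of "?F (\<Union>i\<in>S. J i)"] by simp
qed

lemma block_le:
  fixes i m k :: nat
  assumes "i < m"
  shows "i * k + k \<le> m * k"
  using assms mult_le_mono1[of "Suc i" m k] by simp

lemma abs_diff_mult_le_add:
  fixes x a b c \<beta> \<delta> :: real
  assumes b: "0 \<le> b" "b \<le> 1" and x: "\<bar>x - a * b\<bar> \<le> \<beta>" and a: "\<bar>a - c\<bar> \<le> \<delta>"
  shows "\<bar>x - b * c\<bar> \<le> \<beta> + \<delta>"
proof -
  have "\<bar>b * (a - c)\<bar> \<le> \<bar>a - c\<bar>"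
    using b by (simp add: abs_mult mult_left_le_one_le)
  moreover have "\<bar>x - b * c\<bar> \<le> \<bar>x - a * b\<bar> + \<bar>b * (a - c)\<bar>"
    using abs_triangle_ineq[of "x - a * b" "b * (a - c)"] by (simp add: algebra_simps)
  ultimately show ?thesis
    using x a by linarith
qed

lemma dissociated_blocks:
  fixes J :: "nat \<Rightarrow> nat set"
  assumes dis: "dissociated M N d n \<beta> L X" and d: "d \<ge> 1" and mk: "m * k \<le> L" "m * k \<le> n"
    and blocks: "\<And>i. i < m \<Longrightarrow> J i \<subseteq> {i * k + 1..i * k + k}"
    and card: "\<And>i. i < m \<Longrightarrow> d \<le> card (J i)"
    and j: "j < m" and S: "S \<subseteq> {..<j}" "S \<noteq> {}"
    and A: "A \<in> sets (array_sigma M N d X (\<Union>i\<in>S. J i))"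
    and B: "B \<in> sets (array_sigma M N d X (J j))"
  shows "\<bar>measure M (A \<inter> B) - measure M A * measure M B\<bar> \<le> \<beta>"
proof -
  let ?U = "\<Union>i\<in>S. J i"
  have U: "?U \<subseteq> {1..j * k}"
  proof
    fix x
    assume "x \<in> ?U"
    then obtain i where i: "i \<in> S" "x \<in> J i"
      by blast
    then have "i < j"
      using S by auto
    then have "i * k + k \<le> j * k"
      by (rule block_le)
    then show "x \<in> {1..j * k}"
      using blocks[of i] i \<open>i < j\<close> j by auto
  qed
  have K: "J j \<subseteq> {j * k + 1..j * k + k}"
    using blocks[OF j] .
  have jk: "j * k + k \<le> L" "j * k + k \<le> n"
    using block_le[OF j, of k] mk by simp_all
  obtain i0 where i0: "i0 \<in> S"
    using S by auto
  have "d \<le> card (J i0)"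
    using card i0 S j by auto
  also have "\<dots> \<le> card ?U"
    using U i0 by (intro card_mono) (auto intro: finite_subset)
  finally have card_U: "d \<le> card ?U" .
  have "card ?U + card (J j) \<le> j * k + k"
    using card_mono[OF _ U] card_mono[OF _ K] by simp
  moreover have "?U \<noteq> {}" "J j \<noteq> {}"
    using card_U card[OF j] d by (intro notI; simp)+
  then have "Max ?U \<le> j * k" "j * k + 1 \<le> Min (J j)"
    using U K finite_subset[OF U] finite_subset[OF K] by (auto simp: Max_le_iff Min_ge_iff)
  moreover have "?U \<subseteq> {1..n}" "J j \<subseteq> {1..n}"
    using U K jk by auto
  ultimately show ?thesis
    using A B card_U card[OF j] jk by (intro dis[unfolded dissociated_def, rule_format]) auto
qed

(* Induction on S along its largest element j: the event for S - {j} is determined by the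
   blocks to the left of J_j, so dissociation decouples it from the event for j. *)
lemma dissociated_imp_approx_indep:
  fixes s :: "nat \<Rightarrow> 'a \<Rightarrow> real" and J :: "nat \<Rightarrow> nat set"
  assumes M: "prob_space M" and d: "d \<ge> 1" and \<beta>: "\<beta> \<ge> 0"
    and dis: "dissociated M N d n \<beta> L X" and mk: "m * k \<le> L" "m * k \<le> n"
    and blocks: "\<And>i. i < m \<Longrightarrow> J i \<subseteq> {i * k + 1..i * k + k}"
    and card: "\<And>i. i < m \<Longrightarrow> d \<le> card (J i)"
    and X: "\<And>s. s \<in> dsubsets {1..n} d \<Longrightarrow> X s \<in> M \<rightarrow>\<^sub>M N"
    and s: "\<And>i. i < m \<Longrightarrow> s i \<in> borel_measurable (array_sigma M N d X (J i))"
  shows "approx_indep M \<beta> m s"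
proof -
  interpret prob_space M by fact
  let ?F = "array_sigma M N d X"
  let ?E = "\<lambda>v S. {x\<in>space M. \<forall>i\<in>S. s i x = v i}"
  have E_sets: "?E v S \<in> sets (?F (\<Union>i\<in>S. J i))" if "S \<subseteq> {..<m}" for S v
    using that finite_subset[OF that] s by (intro Collect_all_eq_in_array_sigma) auto
  have E_events: "?E v S \<in> events" if S: "S \<subseteq> {..<m}" for S v
  proof -
    have "J i \<subseteq> {1..n}" if "i < m" for i
      using blocks[OF that] block_le[OF that, of k] mk by auto
    then have "subalgebra M (?F (\<Union>i\<in>S. J i))"
      using S X by (intro subalgebra_array_sigma UN_least) auto
    then show ?thesis
      using E_sets[OF S] by (auto simp: subalgebra_def)
  qed
  have "\<bar>prob (?E v S) - (\<Prod>i\<in>S. prob (?E v {i}))\<bar> \<le> real (card S) * \<beta>"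
    if "S \<subseteq> {..<m}" for S v
    using finite_subset[OF that finite_lessThan] that
  proof (induction S rule: finite_linorder_max_induct)
    case empty
    then show ?case
      by (simp add: prob_space)
  next
    case (insert j S')
    let ?A = "?E v S'" and ?B = "?E v {j}"
    have j: "j < m" and S'_m: "S' \<subseteq> {..<m}"
      using insert.prems by auto
    have "\<bar>prob (?A \<inter> ?B) - prob ?A * prob ?B\<bar> \<le> \<beta>"
    proof (cases "S' = {}")
      case True
      then show ?thesis
        using \<beta> E_events[of "{j}"] j by (simp add: Int_absorb1 sets.sets_into_space prob_space)
    next
      case False
      have "?A \<in> sets (?F (\<Union>i\<in>S'. J i))" "?B \<in> sets (?F (J j))"
        using E_sets[OF S'_m] E_sets[of "{j}"] j by auto
      then show ?thesis
        using insert.hyps(2) False by (intro dissociated_blocks[OF dis d mk blocks card j]) auto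
    qed
    moreover have "\<bar>prob ?A - (\<Prod>i\<in>S'. prob (?E v {i}))\<bar> \<le> real (card S') * \<beta>"
      using insert.IH S'_m .
    ultimately have "\<bar>prob (?A \<inter> ?B) - prob ?B * (\<Prod>i\<in>S'. prob (?E v {i}))\<bar> \<le> \<beta> + real (card S') * \<beta>"
      by (intro abs_diff_mult_le_add) auto
    moreover have "?E v (insert j S') = ?A \<inter> ?B"
      by auto
    moreover have "j \<notin> S'"
      using insert.hyps(2) by auto
    ultimately show ?case
      using insert.hyps(1) by (simp add: algebra_simps)
  qed
  then show ?thesis
    unfolding approx_indep_def by auto
qed

section \<open>Conditional expectations on blocks\<close>

definition thresh_sgn :: "real \<Rightarrow> real \<Rightarrow> real" where
  "thresh_sgn \<epsilon> z = (if z > \<epsilon> then 1 else if z < - \<epsilon> then - 1 else 0)"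

lemma thresh_sgn_mem: "thresh_sgn \<epsilon> z \<in> {-1, 0, 1}"
  by (simp add: thresh_sgn_def)

lemma borel_measurable_thresh_sgn [measurable]: "thresh_sgn \<epsilon> \<in> borel_measurable borel"
  unfolding thresh_sgn_def by measurable

lemma cond_exp_thresh_sgn_correlation_gt:
  fixes Y :: "'a \<Rightarrow> real"
  assumes M: "prob_space M" and F: "subalgebra M F"
    and Y: "Y \<in> borel_measurable M" "integrable M Y" and \<epsilon>: "\<epsilon> > 0"
    and small: "measure M {\<omega>\<in>space M. \<bar>real_cond_exp M F Y \<omega>\<bar> \<le> \<epsilon>} < 1 - \<epsilon>"
  shows "(\<integral>\<omega>. Y \<omega> * thresh_sgn \<epsilon> (real_cond_exp M F Y \<omega>) \<partial>M) > \<epsilon>\<^sup>2"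
proof -
  interpret prob_space M by fact
  interpret sigma_finite_subalgebra M F
    using F by (intro finite_measure_subalgebra_is_sigma_finite) (simp add: finite_measure_subalgebra_def
      finite_measure_subalgebra_axioms_def finite_measure_axioms)
  define Z where "Z = real_cond_exp M F Y"
  define s where "s \<omega> = thresh_sgn \<epsilon> (Z \<omega>)" for \<omega>
  define A where "A = {\<omega>\<in>space M. \<epsilon> < \<bar>Z \<omega>\<bar>}"
  have Z: "Z \<in> borel_measurable F" "Z \<in> borel_measurable M"
    unfolding Z_def by (rule borel_measurable_cond_exp borel_measurable_cond_exp2)+
  have s: "s \<in> borel_measurable F"
    unfolding s_def thresh_sgn_def using Z(1) by measurable
  have "integrable M (\<lambda>\<omega>. Y \<omega> * s \<omega>)"
    using Y(2) measurable_from_subalg[OF F s] by (rule integrable_mult_bounded[where B = 1]) (simp add: s_def thresh_sgn_def)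
  then have int_sY: "integrable M (\<lambda>\<omega>. s \<omega> * Y \<omega>)"
    by (simp add: mult.commute)
  have A: "A \<in> events"
    unfolding A_def using Z(2) by measurable
  have "prob A = 1 - measure M {\<omega>\<in>space M. \<bar>Z \<omega>\<bar> \<le> \<epsilon>}"
  proof -
    have "A = space M - {\<omega>\<in>space M. \<bar>Z \<omega>\<bar> \<le> \<epsilon>}"
      by (auto simp: A_def)
    moreover have "{\<omega>\<in>space M. \<bar>Z \<omega>\<bar> \<le> \<epsilon>} \<in> events"
      using Z(2) by measurable
    ultimately show ?thesis
      by (simp add: prob_compl)
  qed
  then have "\<epsilon> * \<epsilon> < \<epsilon> * prob A"
    using small \<epsilon> by (simp add: Z_def)
  also have "\<epsilon> * prob A = (\<integral>\<omega>. \<epsilon> * indicator A \<omega> \<partial>M)"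
    using A by simp
  also have "\<dots> \<le> (\<integral>\<omega>. s \<omega> * Z \<omega> \<partial>M)"
  proof (rule integral_mono)
    show "integrable M (\<lambda>\<omega>. \<epsilon> * indicator A \<omega>)"
      using A by (simp add: integrable_indicator_iff less_top[symmetric])
    show "integrable M (\<lambda>\<omega>. s \<omega> * Z \<omega>)"
      unfolding Z_def by (rule real_cond_exp_intg(1)[OF int_sY s Y(1)])
    show "\<epsilon> * indicator A \<omega> \<le> s \<omega> * Z \<omega>" for \<omega>
      using \<epsilon> by (auto simp: s_def A_def thresh_sgn_def indicator_def)
  qed
  also have "\<dots> = (\<integral>\<omega>. s \<omega> * Y \<omega> \<partial>M)"
    unfolding Z_def by (rule real_cond_exp_intg(2)[OF int_sY s Y(1)])
  finally show ?thesis
    by (simp add: power2_eq_square s_def Z_def mult.commute)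
qed

lemma ell_par_div_bound:
  assumes p: "1 < p" and \<epsilon>: "0 < \<epsilon>" "\<epsilon> \<le> 1" and k: "k \<ge> 1"
  shows "4 / (p - 1) - 1 < real (ell_par p \<epsilon> k div k) * \<epsilon> ^ 4"
proof -
  define L where "L = ell_par p \<epsilon> k"
  define m where "m = L div k"
  have e4: "\<epsilon> ^ 4 > 0" "\<epsilon> ^ 4 \<le> 1"
    using \<epsilon> by (auto simp: power_le_one)
  have "4 / (\<epsilon> ^ 4 * (p - 1)) * real k \<le> real L"
    unfolding L_def ell_par_def by linarith
  also have "L < (m + 1) * k"
    using k by (simp add: m_def dividend_less_div_times)
  then have "real L < (real m + 1) * real k"
    by (metis of_nat_1 of_nat_add of_nat_less_iff of_nat_mult)
  finally have "4 / (\<epsilon> ^ 4 * (p - 1)) < real m + 1"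
    by (rule mult_right_less_imp_less) simp
  then have "4 / (p - 1) < (real m + 1) * \<epsilon> ^ 4"
    using e4 p by (simp add: field_simps)
  then show ?thesis
    using e4 by (simp add: m_def L_def algebra_simps)
qed

lemma block_is_interval:
  assumes "i < m" and "m * k \<le> n"
  shows "is_interval n {i * k + 1..i * k + k}" and "card {i * k + 1..i * k + k} = k"
  using block_le[OF assms(1), of k] assms(2) by (auto simp: is_interval_def)

lemma dissociated_exists_block_small_cond_exp:
  fixes Y :: "'a \<Rightarrow> real" and J :: "nat \<Rightarrow> nat set"
  assumes M: "prob_space M" and d: "d \<ge> 1" and p: "1 < p" "p \<le> 2" and \<epsilon>: "0 < \<epsilon>" "\<epsilon> \<le> 1"
    and m: "4 / (p - 1) - 1 < real m * \<epsilon> ^ 4" and mk: "m * k \<le> L" "m * k \<le> n"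
    and X: "\<And>s. s \<in> dsubsets {1..n} d \<Longrightarrow> X s \<in> M \<rightarrow>\<^sub>M N"
    and dis: "dissociated M N d n (beta_par p \<epsilon>) L X"
    and Y: "Y \<in> borel_measurable M" "integral\<^sup>L M Y = 0" "integrable M (\<lambda>\<omega>. \<bar>Y \<omega>\<bar> powr p)"
      "(\<integral>\<omega>. \<bar>Y \<omega>\<bar> powr p \<partial>M) powr (1 / p) = 1"
    and blocks: "\<And>i. i < m \<Longrightarrow> J i \<subseteq> {i * k + 1..i * k + k}"
    and card: "\<And>i. i < m \<Longrightarrow> d \<le> card (J i)"
  shows "\<exists>i<m. 1 - \<epsilon> \<le> measure M {\<omega>\<in>space M. \<bar>real_cond_exp M (array_sigma M N d X (J i)) Y \<omega>\<bar> \<le> \<epsilon>}"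
proof (rule ccontr)
  assume "\<not> ?thesis"
  then have small: "measure M {\<omega>\<in>space M. \<bar>real_cond_exp M (array_sigma M N d X (J i)) Y \<omega>\<bar> \<le> \<epsilon>} < 1 - \<epsilon>"
    if "i < m" for i
    using that by auto
  define s where "s i \<omega> = thresh_sgn \<epsilon> (real_cond_exp M (array_sigma M N d X (J i)) Y \<omega>)" for i \<omega>
  have Y_int: "integrable M Y"
    using prob_space.axioms(1)[OF M] Y(1) _ Y(3) by (rule integrable_of_integrable_abs_powr) (use p in simp)
  have F: "subalgebra M (array_sigma M N d X (J i))" if "i < m" for i
  proof -
    have "J i \<subseteq> {1..n}"
      using blocks[OF that] block_le[OF that, of k] mk by auto
    then show ?thesis
      using X by (rule subalgebra_array_sigma)
  qed
  have s_F: "s i \<in> borel_measurable (array_sigma M N d X (J i))" for i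
    unfolding s_def by measurable
  have "(\<Sum>i<m. \<epsilon>\<^sup>2) \<le> (\<Sum>i<m. \<integral>\<omega>. Y \<omega> * s i \<omega> \<partial>M)"
    using cond_exp_thresh_sgn_correlation_gt[OF M F Y(1) Y_int \<epsilon>(1) small] unfolding s_def
    by (intro sum_mono less_imp_le) auto
  also have "\<dots> < real m * \<epsilon>\<^sup>2"
  proof (rule approx_indep_correlation_lt[OF M p \<epsilon> m Y])
    show "approx_indep M (beta_par p \<epsilon>) m s"
      using blocks card s_F X
      by (intro dissociated_imp_approx_indep[OF M d _ dis mk, where J = J]) (auto simp: beta_par_def)
    show "s i \<in> borel_measurable M" if "i < m" for i
      using measurable_from_subalg[OF F[OF that] s_F] .
  qed (use thresh_sgn_mem in \<open>auto simp: s_def\<close>)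
  finally show False
    by simp
qed

theorem theorem2p2:
  fixes M :: "'a measure" and N :: "'x measure"
    and X :: "nat set \<Rightarrow> 'a \<Rightarrow> 'x"
    and f :: "(nat set \<Rightarrow> 'x) \<Rightarrow> real"
    and d k n :: nat and p \<epsilon> :: real
  assumes "prob_space M"
    and "d \<ge> 1" and "1 < p" and "p \<le> 2" and "0 < \<epsilon>" and "\<epsilon> \<le> 1" and "k \<ge> d"
    and "n \<ge> ell_par p \<epsilon> k"
    and "\<And>s. s \<in> dsubsets {1..n} d \<Longrightarrow> X s \<in> M \<rightarrow>\<^sub>M N"
    and "dissociated M N d n (beta_par p \<epsilon>) (ell_par p \<epsilon> k) X"
    and "f \<in> borel_measurable (PiM (dsubsets {1..n} d) (\<lambda>_. N))"
    and "integral\<^sup>L M (\<lambda>\<omega>. f (\<lambda>s\<in>dsubsets {1..n} d. X s \<omega>)) = 0"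
    and "integrable M (\<lambda>\<omega>. \<bar>f (\<lambda>s\<in>dsubsets {1..n} d. X s \<omega>)\<bar> powr p)"
    and "(\<integral>\<omega>. \<bar>f (\<lambda>s\<in>dsubsets {1..n} d. X s \<omega>)\<bar> powr p \<partial>M) powr (1 / p) = 1"
  shows "\<exists>I. is_interval n I \<and> card I = k \<and>
           (\<forall>J. J \<subseteq> I \<and> card J \<ge> d \<longrightarrow>
              measure M {\<omega> \<in> space M.
                 \<bar>real_cond_exp M (array_sigma M N d X J)
                    (\<lambda>\<omega>. f (\<lambda>s\<in>dsubsets {1..n} d. X s \<omega>)) \<omega>\<bar> \<le> \<epsilon>} \<ge> 1 - \<epsilon>)"
proof (rule ccontr)
  assume no_interval: "\<not> ?thesis"
  define Y where "Y = (\<lambda>\<omega>. f (\<lambda>s\<in>dsubsets {1..n} d. X s \<omega>))"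
  define m where "m = ell_par p \<epsilon> k div k"
  have mk: "m * k \<le> ell_par p \<epsilon> k" "m * k \<le> n"
    using assms(8) by (simp_all add: m_def le_trans[OF div_times_less_eq_dividend])
  let ?bad = "\<lambda>i J. J \<subseteq> {i * k + 1..i * k + k} \<and> d \<le> card J \<and>
      measure M {\<omega>\<in>space M. \<bar>real_cond_exp M (array_sigma M N d X J) Y \<omega>\<bar> \<le> \<epsilon>} < 1 - \<epsilon>"
  define J where "J i = (SOME J. ?bad i J)" for i
  have ex: "\<exists>J. ?bad i J" if "i < m" for i
    using no_interval block_is_interval[OF that mk(2)] unfolding Y_def by (auto simp: not_le)
  have J: "?bad i (J i)" if "i < m" for i
    unfolding J_def by (rule someI_ex[OF ex[OF that]])
  have m: "4 / (p - 1) - 1 < real m * \<epsilon> ^ 4"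
    unfolding m_def using assms(2-7) by (intro ell_par_div_bound) auto
  have "Y \<in> borel_measurable M"
    unfolding Y_def using measurable_restrict[OF assms(9)] assms(11) by (rule measurable_compose)
  moreover have "integral\<^sup>L M Y = 0" "integrable M (\<lambda>\<omega>. \<bar>Y \<omega>\<bar> powr p)"
    "(\<integral>\<omega>. \<bar>Y \<omega>\<bar> powr p \<partial>M) powr (1 / p) = 1"
    using assms(12-14) by (simp_all add: Y_def)
  ultimately have "\<exists>i<m. 1 - \<epsilon> \<le> measure M {\<omega>\<in>space M. \<bar>real_cond_exp M (array_sigma M N d X (J i)) Y \<omega>\<bar> \<le> \<epsilon>}"
    using J by (intro dissociated_exists_block_small_cond_exp[OF assms(1-6) m mk assms(9,10)]) auto
  then show False
    using J by force
qed

end
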